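(* For any finite simple graph $G$ of order $n$ with $v_{even}(G)>0$, there is $f\in\mathrm{SEDF}^0(G)$ such that $f(G)\le n-2+v_{even}(G)$; hence $\gamma_s'(G)\le n-2+v_{even}(G)$.
   Context: For $f:E(G)\to\{1,-1\}$, $f(G)=\sum_{e\in E(G)}f(e)$ and $f(v)=\sum_{e\in E_G(v)}f(e)$, where $E_G(v)$ is the set of edges incident with $v$. $\mathrm{SEDF}^0(G)$ is the set of functions $f:E(G)\to\{1,-1\}$ such that (a) $f(v)\ge 0$ for all $v\in V(G)$, and (b) $f(u)+f(v)\ge 2$ for every edge $uv$ with $f(uv)=1$. A signed edge domination function (SEDF) is $f:E(G)\to\{1,-1\}$ with $\sum_{e'\in E_G(u)\cup E_G(v)}f(e')\ge1$ for every edge $uv$; $\gamma_s'(G)$ is the minimum of $f(G)$ over all SEDFs. $v_{even}(G)$ is the number of vertices of even degree in $G$. *)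

theory Defs
  imports Main
begin

definition simple_graph :: "'a set \<Rightarrow> 'a set set \<Rightarrow> bool" where
  "simple_graph V E \<longleftrightarrow> finite V \<and> (\<forall>e\<in>E. \<exists>u v. u \<noteq> v \<and> u \<in> V \<and> v \<in> V \<and> e = {u, v})"

definition inc_edges :: "'a set set \<Rightarrow> 'a \<Rightarrow> 'a set set" where
  "inc_edges E v = {e \<in> E. v \<in> e}"

definition degree :: "'a set set \<Rightarrow> 'a \<Rightarrow> nat" where
  "degree E v = card (inc_edges E v)"

definition v_even :: "'a set \<Rightarrow> 'a set set \<Rightarrow> nat" where
  "v_even V E = card {v \<in> V. even (degree E v)}"

definition fG :: "'a set set \<Rightarrow> ('a set \<Rightarrow> int) \<Rightarrow> int" where
  "fG E f = (\<Sum>e\<in>E. f e)"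

definition fv :: "'a set set \<Rightarrow> ('a set \<Rightarrow> int) \<Rightarrow> 'a \<Rightarrow> int" where
  "fv E f v = (\<Sum>e\<in>inc_edges E v. f e)"

definition signed_edge_fun :: "'a set set \<Rightarrow> ('a set \<Rightarrow> int) \<Rightarrow> bool" where
  "signed_edge_fun E f \<longleftrightarrow> (\<forall>e\<in>E. f e = 1 \<or> f e = -1)"

definition SEDF0 :: "'a set \<Rightarrow> 'a set set \<Rightarrow> ('a set \<Rightarrow> int) \<Rightarrow> bool" where
  "SEDF0 V E f \<longleftrightarrow> signed_edge_fun E f
     \<and> (\<forall>v\<in>V. fv E f v \<ge> 0)
     \<and> (\<forall>u v. {u, v} \<in> E \<and> f {u, v} = 1 \<longrightarrow> fv E f u + fv E f v \<ge> 2)"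

definition SEDF :: "'a set set \<Rightarrow> ('a set \<Rightarrow> int) \<Rightarrow> bool" where
  "SEDF E f \<longleftrightarrow> signed_edge_fun E f
     \<and> (\<forall>u v. {u, v} \<in> E \<longrightarrow> (\<Sum>e\<in>inc_edges E u \<union> inc_edges E v. f e) \<ge> 1)"

text \<open>Signed edge domination number: minimum of f(G) over all SEDFs.
  Only values on E matter, so the set of values is finite.\<close>
definition gamma_s' :: "'a set set \<Rightarrow> int" where
  "gamma_s' E = Min {fG E f | f. SEDF E f}"

end

theory Submission
  imports Defs
begin

text \<open>
  Let the demand \<open>\<mu> v\<close> be the least positive integer of the parity of \<open>deg v\<close>, or \<open>0\<close> if \<open>v\<close> is
  isolated.
  Joining a new vertex \<open>w\<close> to every \<open>v\<close> by \<open>\<mu> v\<close> parallel edges makes all degrees except that of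
  \<open>w\<close> even, so repeatedly splitting off pairs of edges yields a \<open>\<plusminus>1\<close> signing summing to zero at
  every vertex but \<open>w\<close>. Restricted to \<open>G\<close> it satisfies \<open>|f(v)| \<le> \<mu> v\<close>, and after a global sign
  change \<open>f(G) \<ge> 0\<close>. Flipping negative edges at vertices with \<open>f(v) < \<mu> v\<close> reaches \<open>f(v) \<ge> \<mu> v\<close>,
  which puts \<open>f\<close> in \<open>SEDF\<^sup>0(G)\<close>, and raises \<open>f(G)\<close> by at most \<open>\<Sum>(\<mu> v - f(v)) = \<Sum>\<mu> v - 2 f(G)\<close>;
  so in the end \<open>f(G) \<le> \<Sum>\<mu> v \<le> n + v\<^sub>e\<^sub>v\<^sub>e\<^sub>n\<close>. The missing \<open>-2\<close> comes from an isolated even vertex if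
  every even vertex is isolated. Otherwise some \<open>r\<close> of positive even degree has neighbours \<open>y \<noteq> y'\<close>;
  fixing \<open>f(ry) = f(ry') = 1\<close> and treating the rest of the graph as above covers four units of
  demand at a cost of two.
\<close>

section \<open>Balanced signings of multigraphs\<close>

definition incident :: "'e set \<Rightarrow> ('e \<Rightarrow> 'v set) \<Rightarrow> 'v \<Rightarrow> 'e set" where
  "incident E ends v = {e \<in> E. v \<in> ends e}"

definition linked :: "'e set \<Rightarrow> ('e \<Rightarrow> 'v set) \<Rightarrow> 'v rel" where
  "linked E ends = {(u, v). \<exists>e\<in>E. u \<in> ends e \<and> v \<in> ends e}"

definition reachable :: "'e set \<Rightarrow> ('e \<Rightarrow> 'v set) \<Rightarrow> 'v \<Rightarrow> 'v set" where
  "reachable E ends w = {v. (w, v) \<in> (linked E ends)\<^sup>*}"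

lemma reachable_refl [simp]: "w \<in> reachable E ends w"
  by (simp add: reachable_def)

lemma reachable_step:
  "\<lbrakk>u \<in> reachable E ends w; e \<in> E; u \<in> ends e; v \<in> ends e\<rbrakk> \<Longrightarrow> v \<in> reachable E ends w"
  unfolding reachable_def linked_def by (auto intro: rtrancl_into_rtrancl)

lemma reachable_sym: "v \<in> reachable E ends w \<Longrightarrow> w \<in> reachable E ends v"
proof -
  have "(linked E ends)\<inverse> = linked E ends"
    unfolding linked_def by auto
  then show "v \<in> reachable E ends w \<Longrightarrow> w \<in> reachable E ends v"
    unfolding reachable_def by (metis mem_Collect_eq rtrancl_converseI)
qed

lemma reachable_subset:
  assumes "w \<in> S" and "\<And>e u. \<lbrakk>e \<in> E; u \<in> ends e; u \<in> S\<rbrakk> \<Longrightarrow> ends e \<subseteq> S"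
  shows "reachable E ends w \<subseteq> S"
proof
  fix v assume "v \<in> reachable E ends w"
  then have "(w, v) \<in> (linked E ends)\<^sup>*"
    by (simp add: reachable_def)
  then show "v \<in> S"
  proof (induction rule: rtrancl_induct)
    case base
    show ?case using assms(1) .
  next
    case (step u v)
    then obtain e where "e \<in> E" "u \<in> ends e" "v \<in> ends e"
      by (auto simp: linked_def)
    with step.IH assms(2) show ?case by blast
  qed
qed

lemma reachable_mono:
  assumes "E \<subseteq> E'" and "\<And>e. e \<in> E \<Longrightarrow> ends e = ends' e"
  shows "reachable E ends w \<subseteq> reachable E' ends' w"
proof -
  have "linked E ends \<subseteq> linked E' ends'"
    using assms unfolding linked_def by fastforce
  then show ?thesis
    unfolding reachable_def using rtrancl_mono by blast
qed

lemma sum_card_incident: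
  assumes "finite E" and "finite C"
  shows "(\<Sum>v\<in>C. card (incident E ends v)) = (\<Sum>e\<in>E. card (ends e \<inter> C))"
proof -
  have "(\<Sum>v\<in>C. card (incident E ends v)) = (\<Sum>v\<in>C. \<Sum>e\<in>E. if v \<in> ends e then 1 else 0)"
    using assms by (simp add: incident_def sum.If_cases Int_def)
  also have "\<dots> = (\<Sum>e\<in>E. \<Sum>v\<in>C. if v \<in> ends e then 1 else 0)"
    by (rule sum.swap)
  also have "\<dots> = (\<Sum>e\<in>E. card (ends e \<inter> C))"
    using assms by (simp add: sum.If_cases Int_commute)
  finally show ?thesis .
qed

text \<open>Handshake parity inside the component of an odd vertex \<open>a\<close>: it must contain a second odd
  vertex, and \<open>w\<close> is the only candidate.\<close>
lemma odd_vertex_reachable: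
  assumes fin: "finite E" and two: "\<forall>e\<in>E. card (ends e) = 2"
    and odd_a: "odd (card (incident E ends a))"
    and even: "\<And>v. v \<noteq> a \<Longrightarrow> v \<noteq> w \<Longrightarrow> even (card (incident E ends v))"
  shows "a \<in> reachable E ends w"
proof (rule ccontr)
  assume "a \<notin> reachable E ends w"
  define C where "C = reachable E ends a"
  have "w \<notin> C"
    using \<open>a \<notin> reachable E ends w\<close> reachable_sym unfolding C_def by fastforce
  have "a \<in> C"
    by (simp add: C_def)
  have "finite C"
  proof (rule finite_subset)
    show "C \<subseteq> insert a (\<Union>(ends ` E))"
      unfolding C_def by (rule reachable_subset) auto
    show "finite (insert a (\<Union>(ends ` E)))"
      using fin two by (auto intro: card_ge_0_finite)
  qed
  have "even (card (ends e \<inter> C))" if "e \<in> E" for e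
  proof (cases "ends e \<inter> C = {}")
    case False
    then have "ends e \<subseteq> C"
      using that reachable_step unfolding C_def by fast
    then show ?thesis
      using that two by (simp add: Int_absorb2)
  qed simp
  then have "even (\<Sum>v\<in>C. card (incident E ends v))"
    by (simp add: sum_card_incident[OF fin \<open>finite C\<close>] dvd_sum)
  moreover have "even (\<Sum>v\<in>C - {a}. card (incident E ends v))"
    using even \<open>w \<notin> C\<close> by (intro dvd_sum) blast
  ultimately show False
    using odd_a \<open>finite C\<close> \<open>a \<in> C\<close> by (simp add: sum.remove)
qed

lemma reachable_without_one_of:
  assumes "a \<in> reachable F ends w" and "e \<in> F" "e' \<in> F" "e \<noteq> e'" "a \<in> ends e" "a \<in> ends e'"
  shows "a \<in> reachable (F - {e}) ends w \<or> a \<in> reachable (F - {e'}) ends w"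
proof (rule ccontr)
  assume neither: "\<not> ?thesis"
  define R where "R = reachable (F - {e, e'}) ends w"
  have R_sub: "R \<subseteq> reachable (F - {e}) ends w" "R \<subseteq> reachable (F - {e'}) ends w"
    unfolding R_def by (rule reachable_mono; auto)+
  have "reachable F ends w \<subseteq> R"
  proof (rule reachable_subset)
    fix g u assume g: "g \<in> F" "u \<in> ends g" "u \<in> R"
    have "g \<noteq> e"
      using g R_sub(2) neither reachable_step[of u "F - {e'}" ends w e a] assms by blast
    moreover have "g \<noteq> e'"
      using g R_sub(1) neither reachable_step[of u "F - {e}" ends w e' a] assms by blast
    ultimately show "ends g \<subseteq> R"
      using g reachable_step unfolding R_def by fastforce
  qed (simp add: R_def)
  then show False
    using assms(1) R_sub neither by blast
qed

lemma obtain_edge_keeping_reachable: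
  assumes "a \<in> reachable F ends w" and "e \<in> F" "a \<in> ends e"
  obtains e' where "e' \<in> F" "a \<in> ends e'"
    "\<And>g. \<lbrakk>g \<in> F - {e'}; a \<in> ends g\<rbrakk> \<Longrightarrow> a \<in> reachable (F - {e'}) ends w"
proof (cases "\<exists>g\<in>F - {e}. a \<in> ends g")
  case True
  then obtain g where g: "g \<in> F" "e \<noteq> g" "a \<in> ends g"
    by blast
  from reachable_without_one_of[OF assms(1,2) g(1,2) assms(3) g(3)] show ?thesis
    using that assms(2,3) g(1,3) by blast
next
  case False
  then show ?thesis
    using that assms(2,3) by blast
qed

lemma card_2_obtain_other:
  assumes "card S = 2" and "x \<in> S"
  obtains y where "S = {x, y}" "y \<noteq> x"
  using assms by (auto simp: card_2_iff doubleton_eq_iff)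

definition balanced_signing :: "'e set \<Rightarrow> ('e \<Rightarrow> 'v set) \<Rightarrow> 'v \<Rightarrow> ('e \<Rightarrow> int) \<Rightarrow> bool" where
  "balanced_signing E ends w l \<longleftrightarrow>
     (\<forall>e\<in>E. l e = 1 \<or> l e = -1) \<and> (\<forall>v. v \<noteq> w \<longrightarrow> (\<Sum>e\<in>incident E ends v. l e) = 0)"

text \<open>Splitting off the path \<open>w \<midarrow>e\<^sub>1\<midarrow> a \<midarrow>e\<^sub>2\<midarrow> b\<close> at \<open>a\<close>: both edges are replaced by a single
  edge \<open>wb\<close>, which reuses the name \<open>e\<^sub>2\<close> and is dropped if \<open>b = w\<close>.\<close>

lemma incident_split_off:
  fixes E :: "'e set" and ends :: "'e \<Rightarrow> 'v set" and w a b :: 'v and e1 e2 :: 'e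
  defines "E' \<equiv> if b = w then E - {e1, e2} else E - {e1}" and "ends' \<equiv> ends(e2 := {w, b})"
  assumes "ends e1 = {w, a}" "ends e2 = {a, b}" "b \<noteq> a" "v \<noteq> w"
  shows "incident E' ends' v = (if v = a then incident E ends a - {e1, e2} else incident E ends v)"
  using assms by (auto simp: incident_def)

lemma split_off_reachable:
  fixes E :: "'e set" and ends :: "'e \<Rightarrow> 'v set" and w a b :: 'v and e1 e2 :: 'e
  defines "E' \<equiv> if b = w then E - {e1, e2} else E - {e1}" and "ends' \<equiv> ends(e2 := {w, b})"
  assumes conn: "\<forall>e\<in>E. ends e \<subseteq> reachable E ends w"
    and e1: "ends e1 = {w, a}" and e2: "e2 \<in> E" "ends e2 = {a, b}"
    and keep: "\<And>g. \<lbrakk>g \<in> E - {e1, e2}; a \<in> ends g\<rbrakk> \<Longrightarrow> a \<in> reachable (E - {e1, e2}) ends w"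
  shows "\<forall>e\<in>E'. ends' e \<subseteq> reachable E' ends' w"
proof -
  define R where "R = reachable E' ends' w"
  have "E - {e1, e2} \<subseteq> E'" "\<And>e. e \<in> E - {e1, e2} \<Longrightarrow> ends e = ends' e"
    by (auto simp: E'_def ends'_def)
  then have "reachable (E - {e1, e2}) ends w \<subseteq> R"
    unfolding R_def by (rule reachable_mono)
  then have a_R: "a \<in> R" if "g \<in> E - {e1, e2}" "a \<in> ends g" for g
    using keep that by blast
  have b_R: "b \<in> R"
  proof (cases "b = w")
    case False
    then have "e2 \<in> E'"
      using e1 e2 by (auto simp: E'_def doubleton_eq_iff)
    then show ?thesis
      unfolding R_def by (rule reachable_step[OF reachable_refl]) (simp_all add: ends'_def)
  qed (simp add: R_def)
  have "reachable E ends w \<subseteq> insert a R"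
  proof (rule reachable_subset)
    fix g u assume g: "g \<in> E" "u \<in> ends g" "u \<in> insert a R"
    show "ends g \<subseteq> insert a R"
    proof (cases "g = e1 \<or> g = e2")
      case True
      then show ?thesis
        using e1 e2 b_R by (auto simp: R_def)
    next
      case False
      then have gE: "g \<in> E - {e1, e2}" and "g \<in> E'" "ends' g = ends g"
        using g by (auto simp: E'_def ends'_def)
      have "u \<in> R"
        using g(2,3) a_R[OF gE] by (cases "u = a") simp_all
      with \<open>g \<in> E'\<close> \<open>ends' g = ends g\<close> g(2) have "ends g \<subseteq> R"
        unfolding R_def by (metis reachable_step subsetI)
      then show ?thesis
        by blast
    qed
  qed (simp add: R_def)
  have "ends' e \<subseteq> R" if "e \<in> E'" for e
  proof (cases "e = e2")
    case True
    then show ?thesis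
      using b_R by (simp add: ends'_def R_def)
  next
    case False
    then have eE: "e \<in> E - {e1, e2}" and "ends' e = ends e"
      using that by (auto simp: E'_def ends'_def split: if_splits)
    moreover have "ends e \<subseteq> insert a R"
      using conn eE \<open>reachable E ends w \<subseteq> insert a R\<close> by blast
    ultimately show ?thesis
      using a_R[OF eE] by auto
  qed
  then show ?thesis
    by (simp add: R_def)
qed

text \<open>The new edge \<open>wb\<close> passes its sign on to \<open>e\<^sub>2\<close>, and \<open>e\<^sub>1\<close> gets the opposite sign, so
  that the two cancel at \<open>a\<close>.\<close>
lemma balanced_signing_split_off:
  fixes E :: "'e set" and ends :: "'e \<Rightarrow> 'v set" and w a b :: 'v and e1 e2 :: 'e
  defines "E' \<equiv> if b = w then E - {e1, e2} else E - {e1}" and "ends' \<equiv> ends(e2 := {w, b})"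
  assumes "finite E" and e1: "e1 \<in> E" "ends e1 = {w, a}" "a \<noteq> w"
    and e2: "e2 \<in> E" "ends e2 = {a, b}" "b \<noteq> a" "e2 \<noteq> e1"
    and l': "balanced_signing E' ends' w l'"
  shows "\<exists>l. balanced_signing E ends w l"
proof -
  have inc': "incident E' ends' v = (if v = a then incident E ends a - {e1, e2} else incident E ends v)"
    if "v \<noteq> w" for v
    unfolding E'_def ends'_def using e1(2) e2(2,3) that by (rule incident_split_off)
  define t where "t = (if b = w then 1 else l' e2)"
  define l where "l = l'(e1 := - t, e2 := t)"
  have "t = 1 \<or> t = -1"
    using l' e2 by (simp add: t_def E'_def balanced_signing_def)
  then have "\<forall>e\<in>E. l e = 1 \<or> l e = -1"
    using l' by (auto simp: l_def E'_def balanced_signing_def)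
  moreover have "(\<Sum>e\<in>incident E ends v. l e) = 0" if "v \<noteq> w" for v
  proof (cases "v = a")
    case True
    have "finite (incident E' ends' a)"
      using \<open>finite E\<close> by (simp add: E'_def incident_def)
    moreover have "incident E ends a = insert e1 (insert e2 (incident E' ends' a))"
      using inc'[OF e1(3)] e1 e2 by (auto simp: incident_def)
    moreover have "e1 \<notin> incident E' ends' a" "e2 \<notin> incident E' ends' a"
      using inc'[OF e1(3)] by auto
    moreover have "(\<Sum>e\<in>incident E' ends' a. l e) = (\<Sum>e\<in>incident E' ends' a. l' e)"
      using calculation(3,4) by (intro sum.cong) (auto simp: l_def)
    ultimately show ?thesis
      using l' e1(3) e2(4) True by (simp add: l_def balanced_signing_def)
  next
    case False
    then have inc_v: "incident E ends v = incident E' ends' v"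
      using inc'[OF that] by simp
    have "l e = l' e" if "e \<in> incident E' ends' v" for e
      using that False e1 by (auto simp: l_def t_def incident_def E'_def)
    then have "(\<Sum>e\<in>incident E ends v. l e) = (\<Sum>e\<in>incident E' ends' v. l' e)"
      unfolding inc_v by (rule sum.cong[OF refl])
    also have "\<dots> = 0"
      using l' that by (simp add: balanced_signing_def)
    finally show ?thesis .
  qed
  ultimately show ?thesis
    unfolding balanced_signing_def by blast
qed

lemma even_incident_split_off:
  fixes E :: "'e set" and ends :: "'e \<Rightarrow> 'v set" and w a b :: 'v and e1 e2 :: 'e
  defines "E' \<equiv> if b = w then E - {e1, e2} else E - {e1}" and "ends' \<equiv> ends(e2 := {w, b})"
  assumes "finite E" and e1: "e1 \<in> E" "ends e1 = {w, a}" "a \<noteq> w"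
    and e2: "e2 \<in> E" "ends e2 = {a, b}" "b \<noteq> a" "e2 \<noteq> e1"
    and even: "\<forall>v. v \<noteq> w \<longrightarrow> even (card (incident E ends v))"
  shows "\<forall>v. v \<noteq> w \<longrightarrow> even (card (incident E' ends' v))"
proof (intro allI impI)
  fix v assume "v \<noteq> w"
  have sub: "{e1, e2} \<subseteq> incident E ends a"
    using e1 e2 by (auto simp: incident_def)
  have "finite (incident E ends a)"
    using \<open>finite E\<close> by (simp add: incident_def)
  then have "card (incident E ends a - {e1, e2}) = card (incident E ends a) - 2"
    "2 \<le> card (incident E ends a)"
    using card_Diff_subset[OF _ sub] card_mono[OF _ sub] e2(4) by simp_all
  moreover have "incident E' ends' v = (if v = a then incident E ends a - {e1, e2} else incident E ends v)"
    unfolding E'_def ends'_def using e1(2) e2(2,3) \<open>v \<noteq> w\<close> by (rule incident_split_off)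
  ultimately show "even (card (incident E' ends' v))"
    using even e1(3) \<open>v \<noteq> w\<close> by auto
qed

lemma obtain_edge_at_root:
  assumes "E \<noteq> {}" and two: "\<forall>e\<in>E. card (ends e) = 2"
    and conn: "\<forall>e\<in>E. ends e \<subseteq> reachable E ends w"
  obtains e a where "e \<in> E" "ends e = {w, a}" "a \<noteq> w"
proof -
  obtain e0 v0 where e0: "e0 \<in> E" "v0 \<in> ends e0"
    using assms(1) two by (metis card_2_iff ex_in_conv insertI1)
  then have "(w, v0) \<in> (linked E ends)\<^sup>*"
    using conn by (auto simp: reachable_def)
  then have "\<exists>e\<in>E. w \<in> ends e"
    by (cases rule: converse_rtranclE) (use e0 in \<open>auto simp: linked_def\<close>)
  then show ?thesis
    using that two card_2_obtain_other by metis
qed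

text \<open>After removing \<open>e\<^sub>1\<close> the vertex \<open>a\<close> has odd degree, so it is still connected to \<open>w\<close>.\<close>
lemma obtain_split_off_edge:
  assumes fin: "finite E" and two: "\<forall>e\<in>E. card (ends e) = 2"
    and even: "\<forall>v. v \<noteq> w \<longrightarrow> even (card (incident E ends v))"
    and e1: "e1 \<in> E" "ends e1 = {w, a}" "a \<noteq> w"
  obtains e2 b where "e2 \<in> E" "e2 \<noteq> e1" "ends e2 = {a, b}" "b \<noteq> a"
    "\<And>g. \<lbrakk>g \<in> E - {e1, e2}; a \<in> ends g\<rbrakk> \<Longrightarrow> a \<in> reachable (E - {e1, e2}) ends w"
proof -
  define F where "F = E - {e1}"
  have inc_F: "incident F ends v = incident E ends v - {e1}" for v
    by (auto simp: F_def incident_def)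
  have "e1 \<in> incident E ends a" "finite (incident E ends a)"
    using e1 fin by (simp_all add: incident_def)
  then have "card (incident F ends a) = card (incident E ends a) - 1"
    "card (incident E ends a) > 0"
    by (auto simp: inc_F card_gt_0_iff)
  then have odd_a: "odd (card (incident F ends a))"
    using even e1(3) by simp
  have even_F: "even (card (incident F ends v))" if "v \<noteq> a" "v \<noteq> w" for v
  proof -
    have "incident F ends v = incident E ends v"
      using that e1(2) unfolding inc_F by (auto simp: incident_def)
    then show ?thesis
      using that even by simp
  qed
  have a_reach: "a \<in> reachable F ends w"
  proof (rule odd_vertex_reachable[OF _ _ odd_a even_F])
    show "finite F" "\<forall>e\<in>F. card (ends e) = 2"
      using fin two by (simp_all add: F_def)
  qed
  from odd_a have "incident F ends a \<noteq> {}"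
    by (metis card.empty even_zero)
  then obtain e where "e \<in> F" "a \<in> ends e"
    by (auto simp: incident_def)
  then obtain e2 where e2: "e2 \<in> F" "a \<in> ends e2"
    and keep: "\<And>g. \<lbrakk>g \<in> F - {e2}; a \<in> ends g\<rbrakk> \<Longrightarrow> a \<in> reachable (F - {e2}) ends w"
    using obtain_edge_keeping_reachable[OF a_reach] by blast
  moreover obtain b where "ends e2 = {a, b}" "b \<noteq> a"
    using two e2 card_2_obtain_other by (metis DiffD1 F_def)
  moreover have "F - {e2} = E - {e1, e2}"
    by (auto simp: F_def)
  ultimately show ?thesis
    using that by (auto simp: F_def)
qed

lemma balanced_signing_exists:
  assumes "finite E" and "\<forall>e\<in>E. card (ends e) = 2"
    and "\<forall>v. v \<noteq> w \<longrightarrow> even (card (incident E ends v))"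
    and "\<forall>e\<in>E. ends e \<subseteq> reachable E ends w"
  shows "\<exists>l. balanced_signing E ends w l"
  using assms
proof (induction "card E" arbitrary: E ends rule: less_induct)
  case less
  note fin = less.prems(1) and two = less.prems(2) and even = less.prems(3) and conn = less.prems(4)
  show ?case
  proof (cases "E = {}")
    case True
    then show ?thesis
      by (auto simp: balanced_signing_def incident_def)
  next
    case False
    then obtain e1 a where e1: "e1 \<in> E" "ends e1 = {w, a}" "a \<noteq> w"
      using two conn by (rule obtain_edge_at_root)
    then obtain e2 b where e2: "e2 \<in> E" "e2 \<noteq> e1" "ends e2 = {a, b}" "b \<noteq> a"
      and keep: "\<And>g. \<lbrakk>g \<in> E - {e1, e2}; a \<in> ends g\<rbrakk> \<Longrightarrow> a \<in> reachable (E - {e1, e2}) ends w"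
      using obtain_split_off_edge[OF fin two even] by metis
    define E' where "E' = (if b = w then E - {e1, e2} else E - {e1})"
    define ends' where "ends' = ends(e2 := {w, b})"
    have "E' \<subset> E"
      using e1(1) by (auto simp: E'_def)
    then have "card E' < card E"
      using fin by (simp add: psubset_card_mono)
    moreover have "finite E'"
      using fin by (simp add: E'_def)
    moreover have "\<forall>e\<in>E'. card (ends' e) = 2"
      using two e2 by (auto simp: E'_def ends'_def)
    moreover have "\<forall>v. v \<noteq> w \<longrightarrow> even (card (incident E' ends' v))"
      unfolding E'_def ends'_def
      using even_incident_split_off[OF fin e1 e2(1,3,4,2) even] .
    moreover have "\<forall>e\<in>E'. ends' e \<subseteq> reachable E' ends' w"
      unfolding E'_def ends'_def using conn e1(2) e2(1,3) keep by (rule split_off_reachable)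
    ultimately obtain l' where "balanced_signing E' ends' w l'"
      using less.hyps by blast
    then show ?thesis
      unfolding E'_def ends'_def
      by (rule balanced_signing_split_off[OF fin e1 e2(1,3,4,2)])
  qed
qed

lemma simple_graph_edgeE:
  assumes "simple_graph V E" and "e \<in> E"
  obtains u v where "e = {u, v}" "u \<noteq> v" "u \<in> V" "v \<in> V"
  using assms unfolding simple_graph_def by blast

lemma simple_graph_edge_vertices:
  assumes "simple_graph V E" and "{u, v} \<in> E"
  shows "u \<noteq> v" "u \<in> V" "v \<in> V"
  using simple_graph_edgeE[OF assms] by (metis doubleton_eq_iff)+

lemma simple_graph_subset: "simple_graph V E \<Longrightarrow> E' \<subseteq> E \<Longrightarrow> simple_graph V E'"
  unfolding simple_graph_def by blast

lemma simple_graph_finite_edges: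
  assumes "simple_graph V E"
  shows "finite E"
proof (rule finite_subset)
  show "E \<subseteq> Pow V"
    using assms by (auto elim: simple_graph_edgeE)
  show "finite (Pow V)"
    using assms by (simp add: simple_graph_def)
qed

lemma finite_inc_edges: "simple_graph V E \<Longrightarrow> finite (inc_edges E v)"
  by (simp add: inc_edges_def simple_graph_finite_edges)

lemma degree_pos: "simple_graph V E \<Longrightarrow> e \<in> E \<Longrightarrow> v \<in> e \<Longrightarrow> 0 < degree E v"
  using finite_inc_edges[of V E v] by (auto simp: degree_def inc_edges_def card_gt_0_iff)

lemma inc_edges_outside: "simple_graph V E \<Longrightarrow> v \<notin> V \<Longrightarrow> inc_edges E v = {}"
  by (auto simp: inc_edges_def elim: simple_graph_edgeE)

lemma inc_edgesE:
  assumes "simple_graph V E" and "e \<in> inc_edges E v"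
  obtains u where "e = {v, u}" "u \<noteq> v" "u \<in> V" "v \<in> V"
  using assms unfolding inc_edges_def by (auto elim!: simple_graph_edgeE)

lemma sum_fv:
  assumes "simple_graph V E"
  shows "(\<Sum>v\<in>V. fv E f v) = 2 * fG E f"
proof -
  have "finite V"
    using assms by (simp add: simple_graph_def)
  have "(\<Sum>v\<in>V. fv E f v) = (\<Sum>e\<in>E. \<Sum>v\<in>{v\<in>V. v \<in> e}. f e)"
    unfolding fv_def inc_edges_def
    by (rule sum.swap_restrict[OF \<open>finite V\<close> simple_graph_finite_edges[OF assms]])
  also have "\<dots> = (\<Sum>e\<in>E. 2 * f e)"
  proof (rule sum.cong[OF refl])
    fix e assume "e \<in> E"
    obtain a b where "e = {a, b}" "a \<noteq> b" "a \<in> V" "b \<in> V"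
      by (rule simple_graph_edgeE[OF assms \<open>e \<in> E\<close>])
    then have "{v\<in>V. v \<in> e} = {a, b}"
      by auto
    then show "(\<Sum>v\<in>{v\<in>V. v \<in> e}. f e) = 2 * f e"
      using \<open>a \<noteq> b\<close> by simp
  qed
  finally show ?thesis
    by (simp add: fG_def sum_distrib_left)
qed

lemma even_fv_plus_degree:
  assumes "simple_graph V E" and "signed_edge_fun E f"
  shows "even (fv E f v + int (degree E v))"
proof -
  have "fv E f v + int (degree E v) = (\<Sum>e\<in>inc_edges E v. f e + 1)"
    by (simp add: fv_def degree_def sum.distrib)
  moreover have "even (f e + 1)" if "e \<in> inc_edges E v" for e
    using that assms(2) by (auto simp: signed_edge_fun_def inc_edges_def)
  ultimately show ?thesis
    by (simp add: dvd_sum)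
qed

lemma sum_fun_upd:
  fixes f :: "'a \<Rightarrow> 'b::ab_group_add"
  assumes "finite A"
  shows "(\<Sum>a\<in>A. (f(x := y)) a) = (\<Sum>a\<in>A. f a) + (if x \<in> A then y - f x else 0)"
proof (cases "x \<in> A")
  case True
  then show ?thesis
    using assms by (simp add: sum.remove algebra_simps)
next
  case False
  then have "(\<Sum>a\<in>A. (f(x := y)) a) = (\<Sum>a\<in>A. f a)"
    by (intro sum.cong) auto
  with False show ?thesis
    by simp
qed

section \<open>Signings with prescribed lower bounds at the vertices\<close>

lemma obtain_negative_edge:
  assumes "signed_edge_fun E g" and "fv E g v < int (degree E v)"
  obtains e where "e \<in> E" "v \<in> e" "g e = -1"
proof -
  have "\<exists>e\<in>inc_edges E v. g e = -1"
  proof (rule ccontr)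
    assume "\<not> ?thesis"
    then have "\<forall>e\<in>inc_edges E v. g e = 1"
      using assms(1) by (auto simp: signed_edge_fun_def inc_edges_def)
    then have "fv E g v = int (degree E v)"
      by (simp add: fv_def degree_def)
    with assms(2) show False
      by simp
  qed
  then show ?thesis
    using that by (auto simp: inc_edges_def)
qed

lemma fv_fG_flip:
  assumes "simple_graph V E" and "e \<in> E" "g e = -1"
  shows "fv E (g(e := 1)) v = fv E g v + (if v \<in> e then 2 else 0)"
    and "fG E (g(e := 1)) = fG E g + 2"
  using assms(2,3)
  unfolding fv_def fG_def sum_fun_upd[OF finite_inc_edges[OF assms(1)]]
    sum_fun_upd[OF simple_graph_finite_edges[OF assms(1)]]
  by (simp_all add: inc_edges_def)

text \<open>Each flip of a negative edge at a vertex below its bound raises \<open>f(G)\<close> by \<open>2\<close> and lowers the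
  total deficiency by at least \<open>2\<close>, since deficiencies are even.\<close>
lemma raise_signing:
  fixes mu :: "'a \<Rightarrow> nat"
  assumes sg: "simple_graph V E" and g: "signed_edge_fun E g"
    and mu_le: "\<forall>v\<in>V. mu v \<le> degree E v" and parity: "\<forall>v\<in>V. even (degree E v + mu v)"
  shows "\<exists>f. signed_edge_fun E f \<and> (\<forall>v\<in>V. int (mu v) \<le> fv E f v)
    \<and> fG E f \<le> fG E g + (\<Sum>v\<in>V. max 0 (int (mu v) - fv E g v))"
  using g
proof (induction "card {e\<in>E. g e = -1}" arbitrary: g rule: less_induct)
  case less
  have finE: "finite E"
    using sg by (rule simple_graph_finite_edges)
  show ?case
  proof (cases "\<forall>v\<in>V. int (mu v) \<le> fv E g v")
    case True
    then show ?thesis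
      using less.prems by (intro exI[of _ g]) (simp add: sum_nonneg)
  next
    case False
    then obtain v0 where v0: "v0 \<in> V" "fv E g v0 < int (mu v0)"
      by auto
    moreover have "int (mu v0) \<le> int (degree E v0)"
      using mu_le v0(1) by simp
    ultimately have "fv E g v0 < int (degree E v0)"
      by linarith
    then obtain e where e: "e \<in> E" "v0 \<in> e" "g e = -1"
      by (rule obtain_negative_edge[OF less.prems])
    define g' where "g' = g(e := 1)"
    have "signed_edge_fun E g'"
      using less.prems by (simp add: g'_def signed_edge_fun_def)
    have "{e'\<in>E. g' e' = -1} = {e'\<in>E. g e' = -1} - {e}"
      by (auto simp: g'_def)
    also have "\<dots> \<subset> {e'\<in>E. g e' = -1}"
      using e by auto
    finally have "card {e'\<in>E. g' e' = -1} < card {e'\<in>E. g e' = -1}"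
      using finE by (simp add: psubset_card_mono)
    then obtain f where f: "signed_edge_fun E f" "\<forall>v\<in>V. int (mu v) \<le> fv E f v"
      "fG E f \<le> fG E g' + (\<Sum>v\<in>V. max 0 (int (mu v) - fv E g' v))"
      using less.hyps \<open>signed_edge_fun E g'\<close> by blast
    note fv' = fv_fG_flip(1)[where g = g, OF sg e(1,3), folded g'_def]
      and fG' = fv_fG_flip(2)[where g = g, OF sg e(1,3), folded g'_def]
    have "even (int (degree E v0 + mu v0) - (fv E g v0 + int (degree E v0)))"
      using even_fv_plus_degree[OF sg less.prems, of v0] parity v0(1) by simp
    then have "2 \<le> int (mu v0) - fv E g v0"
      using v0(2) by simp presburger
    then have "max 0 (int (mu v) - fv E g' v) \<le> max 0 (int (mu v) - fv E g v) - (if v = v0 then 2 else 0)"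
      for v
      using fv'[of v] e(2) by auto
    then have "(\<Sum>v\<in>V. max 0 (int (mu v) - fv E g' v))
        \<le> (\<Sum>v\<in>V. max 0 (int (mu v) - fv E g v) - (if v = v0 then 2 else 0))"
      by (rule sum_mono)
    also have "\<dots> = (\<Sum>v\<in>V. max 0 (int (mu v) - fv E g v)) - 2"
      using v0(1) sg by (simp add: sum_subtractf simple_graph_def)
    finally show ?thesis
      using f fG' by (intro exI[of _ f]) simp
  qed
qed

text \<open>\<open>G\<close> together with a new vertex \<open>None\<close> joined to each \<open>v \<in> V\<close> by \<open>\<mu> v\<close> parallel edges.\<close>
definition pendant_edges :: "'a set \<Rightarrow> 'a set set \<Rightarrow> ('a \<Rightarrow> nat) \<Rightarrow> ('a set + 'a \<times> nat) set" where
  "pendant_edges V E mu = Inl ` E \<union> Inr ` (SIGMA v:V. {..<mu v})"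

fun pendant_ends :: "'a set + 'a \<times> nat \<Rightarrow> 'a option set" where
  "pendant_ends (Inl e) = Some ` e"
| "pendant_ends (Inr (v, i)) = {None, Some v}"

lemma incident_pendant_Some:
  assumes "v \<in> V"
  shows "incident (pendant_edges V E mu) pendant_ends (Some v)
    = Inl ` inc_edges E v \<union> (\<lambda>i. Inr (v, i)) ` {..<mu v}"
  using assms by (auto simp: incident_def pendant_edges_def inc_edges_def)

lemma incident_pendant_outside:
  assumes "simple_graph V E" and "v \<notin> V"
  shows "incident (pendant_edges V E mu) pendant_ends (Some v) = {}"
  using inc_edges_outside[OF assms] assms(2)
  by (auto simp: incident_def pendant_edges_def inc_edges_def)

lemma sum_incident_pendant_Some:
  assumes "simple_graph V E" and "v \<in> V"
  shows "(\<Sum>x\<in>incident (pendant_edges V E mu) pendant_ends (Some v). l x)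
    = fv E (l \<circ> Inl) v + (\<Sum>i<mu v. l (Inr (v, i)))"
proof -
  have "(\<Sum>x\<in>Inl ` inc_edges E v \<union> (\<lambda>i. Inr (v, i)) ` {..<mu v}. l x)
      = (\<Sum>x\<in>Inl ` inc_edges E v. l x) + (\<Sum>x\<in>(\<lambda>i. Inr (v, i)) ` {..<mu v}. l x)"
    using finite_inc_edges[OF assms(1)] by (intro sum.union_disjoint) auto
  also have "\<dots> = fv E (l \<circ> Inl) v + (\<Sum>i<mu v. l (Inr (v, i)))"
    by (simp add: fv_def sum.reindex inj_on_def)
  finally show ?thesis
    using assms(2) by (simp add: incident_pendant_Some)
qed

lemma card_pendant_ends:
  assumes "simple_graph V E" and "x \<in> pendant_edges V E mu"
  shows "card (pendant_ends x) = 2"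
proof (cases x)
  case (Inl e)
  then obtain a b where "e = {a, b}" "a \<noteq> b"
    using assms by (auto simp: pendant_edges_def elim: simple_graph_edgeE)
  with Inl show ?thesis
    by simp
qed (auto simp: pendant_edges_def)

text \<open>A vertex \<open>v\<close> with \<open>\<mu> v = 0\<close> is reached from \<open>None\<close> through a neighbour \<open>u\<close> with \<open>\<mu> u > 0\<close>.\<close>
lemma pendant_ends_reachable:
  assumes sg: "simple_graph V E"
    and conn: "\<forall>v\<in>V. 0 < degree E v \<longrightarrow> mu v = 0 \<longrightarrow> (\<exists>u. {v, u} \<in> E \<and> 0 < mu u)"
    and "x \<in> pendant_edges V E mu"
  shows "pendant_ends x \<subseteq> reachable (pendant_edges V E mu) pendant_ends None"
proof -
  let ?R = "reachable (pendant_edges V E mu) pendant_ends None"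
  have pendant: "Some v \<in> ?R" if "v \<in> V" "0 < mu v" for v
    by (rule reachable_step[OF reachable_refl, of "Inr (v, 0)"])
      (use that in \<open>auto simp: pendant_edges_def\<close>)
  have endpoint: "Some v \<in> ?R" if "e \<in> E" "v \<in> e" for e v
  proof -
    have "v \<in> V"
      using sg that by (auto elim: simple_graph_edgeE)
    moreover have "0 < degree E v"
      using degree_pos[OF sg that] .
    ultimately consider "0 < mu v" | u where "{v, u} \<in> E" "0 < mu u"
      using conn by blast
    then show ?thesis
    proof cases
      case 1
      then show ?thesis
        using pendant \<open>v \<in> V\<close> by blast
    next
      case 2
      then have "u \<in> V"
        using simple_graph_edge_vertices[OF sg] by blast
      with 2 have "Some u \<in> ?R"
        using pendant by blast
      then show ?thesis
        by (rule reachable_step[of _ _ _ _ "Inl {v, u}"]) (use 2 in \<open>auto simp: pendant_edges_def\<close>)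
    qed
  qed
  show ?thesis
  proof (cases x)
    case (Inl e)
    with assms(3) have "e \<in> E"
      by (auto simp: pendant_edges_def)
    with Inl show ?thesis
      using endpoint by auto
  next
    case (Inr p)
    with assms(3) obtain v i where "p = (v, i)" "v \<in> V" "i < mu v"
      by (auto simp: pendant_edges_def)
    with Inr show ?thesis
      using pendant by auto
  qed
qed

lemma bounded_signing_exists:
  fixes mu :: "'a \<Rightarrow> nat"
  assumes sg: "simple_graph V E"
    and parity: "\<forall>v\<in>V. even (degree E v + mu v)"
    and conn: "\<forall>v\<in>V. 0 < degree E v \<longrightarrow> mu v = 0 \<longrightarrow> (\<exists>u. {v, u} \<in> E \<and> 0 < mu u)"
  shows "\<exists>g. signed_edge_fun E g \<and> (\<forall>v\<in>V. \<bar>fv E g v\<bar> \<le> int (mu v))"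
proof -
  let ?H = "pendant_edges V E mu"
  have "finite ?H"
    using sg by (simp add: pendant_edges_def simple_graph_finite_edges)
       (simp add: simple_graph_def)
  moreover have "\<forall>x\<in>?H. card (pendant_ends x) = 2"
    using sg by (blast intro: card_pendant_ends)
  moreover have "\<forall>x. x \<noteq> None \<longrightarrow> even (card (incident ?H pendant_ends x))"
  proof (intro allI impI)
    fix x :: "'a option" assume "x \<noteq> None"
    then obtain v where "x = Some v"
      by auto
    show "even (card (incident ?H pendant_ends x))"
    proof (cases "v \<in> V")
      case True
      then have "card (incident ?H pendant_ends (Some v))
          = card (Inl ` inc_edges E v :: ('a set + 'a \<times> nat) set)
            + card ((\<lambda>i. Inr (v, i)) ` {..<mu v} :: ('a set + 'a \<times> nat) set)"
        unfolding incident_pendant_Some[OF True]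
        using finite_inc_edges[OF sg, of v] by (subst card_Un_disjoint) auto
      also have "\<dots> = degree E v + mu v"
        by (simp add: card_image inj_on_def degree_def)
      finally show ?thesis
        using parity True \<open>x = Some v\<close> by simp
    qed (simp add: incident_pendant_outside[OF sg] \<open>x = Some v\<close>)
  qed
  moreover have "\<forall>x\<in>?H. pendant_ends x \<subseteq> reachable ?H pendant_ends None"
    using pendant_ends_reachable[OF sg conn] by blast
  ultimately have "\<exists>l. balanced_signing ?H pendant_ends None l"
    by (rule balanced_signing_exists)
  then obtain l where l: "balanced_signing ?H pendant_ends None l" ..
  have "signed_edge_fun E (l \<circ> Inl)"
    using l unfolding balanced_signing_def signed_edge_fun_def pendant_edges_def by simp
  moreover have "\<bar>fv E (l \<circ> Inl) v\<bar> \<le> int (mu v)" if "v \<in> V" for v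
  proof -
    have "(\<Sum>x\<in>incident ?H pendant_ends (Some v). l x) = 0"
      using l by (simp add: balanced_signing_def)
    then have "fv E (l \<circ> Inl) v = - (\<Sum>i<mu v. l (Inr (v, i)))"
      unfolding sum_incident_pendant_Some[OF sg that] by linarith
    also have "\<bar>\<dots>\<bar> \<le> (\<Sum>i<mu v. \<bar>l (Inr (v, i))\<bar>)"
      unfolding abs_minus_cancel by (rule sum_abs)
    also have "\<dots> = (\<Sum>i<mu v. 1)"
    proof (rule sum.cong[OF refl])
      fix i assume "i \<in> {..<mu v}"
      then have "Inr (v, i) \<in> ?H"
        using that by (simp add: pendant_edges_def)
      then show "\<bar>l (Inr (v, i))\<bar> = 1"
        using l unfolding balanced_signing_def by fastforce
    qed
    finally show ?thesis
      by simp
  qed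
  ultimately show ?thesis
    by blast
qed

lemma signing_above_bounds:
  fixes mu :: "'a \<Rightarrow> nat"
  assumes sg: "simple_graph V E"
    and mu_le: "\<forall>v\<in>V. mu v \<le> degree E v"
    and parity: "\<forall>v\<in>V. even (degree E v + mu v)"
    and conn: "\<forall>v\<in>V. 0 < degree E v \<longrightarrow> mu v = 0 \<longrightarrow> (\<exists>u. {v, u} \<in> E \<and> 0 < mu u)"
  shows "\<exists>f. signed_edge_fun E f \<and> (\<forall>v\<in>V. int (mu v) \<le> fv E f v) \<and> fG E f \<le> int (\<Sum>v\<in>V. mu v)"
proof -
  obtain g0 where g0: "signed_edge_fun E g0" "\<forall>v\<in>V. \<bar>fv E g0 v\<bar> \<le> int (mu v)"
    using bounded_signing_exists[OF sg parity conn] by blast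
  text \<open>Negating a signing preserves these bounds, so we may assume \<open>f(G) \<ge> 0\<close>.\<close>
  obtain g where g: "signed_edge_fun E g" "\<forall>v\<in>V. \<bar>fv E g v\<bar> \<le> int (mu v)" "0 \<le> fG E g"
  proof (cases "0 \<le> fG E g0")
    case False
    have "fv E (uminus \<circ> g0) v = - fv E g0 v" "fG E (uminus \<circ> g0) = - fG E g0" for v
      by (simp_all add: fv_def fG_def sum_negf)
    with g0 False show ?thesis
      by (intro that[of "uminus \<circ> g0"]) (auto simp: signed_edge_fun_def)
  qed (use g0 in blast)
  obtain f where f: "signed_edge_fun E f" "\<forall>v\<in>V. int (mu v) \<le> fv E f v"
    "fG E f \<le> fG E g + (\<Sum>v\<in>V. max 0 (int (mu v) - fv E g v))"
    using raise_signing[OF sg g(1) mu_le parity] by blast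
  have "(\<Sum>v\<in>V. max 0 (int (mu v) - fv E g v)) = (\<Sum>v\<in>V. int (mu v) - fv E g v)"
    using g(2) by (intro sum.cong) auto
  also have "\<dots> = int (\<Sum>v\<in>V. mu v) - 2 * fG E g"
    by (simp add: sum_subtractf sum_fv[OF sg])
  finally show ?thesis
    using f g(3) by (intro exI[of _ f]) simp
qed

section \<open>Signed edge domination\<close>

definition demand :: "'a set set \<Rightarrow> 'a \<Rightarrow> nat" where
  "demand E v = (if degree E v = 0 then 0 else if even (degree E v) then 2 else 1)"

lemma demand_le_degree: "demand E v \<le> degree E v"
  by (auto simp: demand_def)

lemma even_degree_plus_demand: "even (degree E v + demand E v)"
  by (simp add: demand_def)

lemma demand_pos: "0 < degree E v \<Longrightarrow> 0 < demand E v"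
  by (simp add: demand_def)

lemma signing_above_demand:
  assumes "simple_graph V E"
  shows "\<exists>f. signed_edge_fun E f \<and> (\<forall>v\<in>V. int (demand E v) \<le> fv E f v)
    \<and> fG E f \<le> int (\<Sum>v\<in>V. demand E v)"
proof (rule signing_above_bounds[OF assms])
  show "\<forall>v\<in>V. 0 < degree E v \<longrightarrow> demand E v = 0 \<longrightarrow> (\<exists>u. {v, u} \<in> E \<and> 0 < demand E u)"
    using demand_pos by (metis less_irrefl)
qed (intro ballI demand_le_degree even_degree_plus_demand)+

text \<open>Since \<open>f(v) \<equiv> deg v\<close> (mod 2), the bound \<open>f(v) \<ge> demand E v\<close> just says \<open>f(v) \<ge> 1\<close> at every
  non-isolated vertex; this makes both conditions of \<open>SEDF\<^sup>0\<close> hold.\<close>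
lemma SEDF0I:
  assumes sg: "simple_graph V E" and f: "signed_edge_fun E f"
    and demand: "\<forall>v\<in>V. int (demand E v) \<le> fv E f v"
  shows "SEDF0 V E f"
  unfolding SEDF0_def
proof (intro conjI f ballI allI impI)
  show "0 \<le> fv E f v" if "v \<in> V" for v
  proof -
    have "int (demand E v) \<le> fv E f v"
      using demand that by blast
    then show ?thesis
      by linarith
  qed
  show "2 \<le> fv E f u + fv E f v" if "{u, v} \<in> E \<and> f {u, v} = 1" for u v
  proof -
    have "int (demand E u) \<le> fv E f u" "int (demand E v) \<le> fv E f v"
      using that demand simple_graph_edge_vertices[OF sg] by blast+
    moreover have "0 < demand E u" "0 < demand E v"
      using degree_pos[OF sg conjunct1[OF that]] by (simp_all add: demand_pos)
    ultimately show ?thesis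
      by linarith
  qed
qed

lemma SEDF0_imp_SEDF:
  assumes sg: "simple_graph V E" and f: "SEDF0 V E f"
  shows "SEDF E f"
  unfolding SEDF_def
proof (intro conjI allI impI)
  show "signed_edge_fun E f"
    using f by (simp add: SEDF0_def)
next
  fix u v assume uv: "{u, v} \<in> E"
  then have "u \<noteq> v" "u \<in> V" "v \<in> V"
    using simple_graph_edge_vertices[OF sg uv] by blast+
  have "inc_edges E u \<inter> inc_edges E v = {{u, v}}"
  proof (intro equalityI subsetI)
    fix e assume "e \<in> inc_edges E u \<inter> inc_edges E v"
    then have "e \<in> E" "u \<in> e" "v \<in> e"
      by (auto simp: inc_edges_def)
    moreover obtain a b where "e = {a, b}"
      using simple_graph_edgeE[OF sg \<open>e \<in> E\<close>] by metis
    ultimately show "e \<in> {{u, v}}"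
      using \<open>u \<noteq> v\<close> by auto
  qed (use uv in \<open>auto simp: inc_edges_def\<close>)
  then have "(\<Sum>e\<in>inc_edges E u \<union> inc_edges E v. f e) = fv E f u + fv E f v - f {u, v}"
    using sum.union_inter[OF finite_inc_edges[OF sg] finite_inc_edges[OF sg], of f u v]
    by (simp add: fv_def)
  moreover have "f {u, v} = 1 \<and> 2 \<le> fv E f u + fv E f v \<or> f {u, v} = -1"
    using f uv by (auto simp: SEDF0_def signed_edge_fun_def)
  moreover have "0 \<le> fv E f u" "0 \<le> fv E f v"
    using f \<open>u \<in> V\<close> \<open>v \<in> V\<close> by (simp_all add: SEDF0_def)
  ultimately show "1 \<le> (\<Sum>e\<in>inc_edges E u \<union> inc_edges E v. f e)"
    by (elim disjE conjE) linarith+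
qed

lemma gamma_s'_le:
  assumes "finite E" and "SEDF E f"
  shows "gamma_s' E \<le> fG E f"
  unfolding gamma_s'_def
proof (rule Min_le)
  have "\<bar>fG E g\<bar> \<le> int (card E)" if "SEDF E g" for g
  proof -
    have "\<bar>fG E g\<bar> \<le> (\<Sum>e\<in>E. \<bar>g e\<bar>)"
      unfolding fG_def by (rule sum_abs)
    also have "\<dots> = (\<Sum>e\<in>E. 1)"
      using that by (intro sum.cong) (auto simp: SEDF_def signed_edge_fun_def)
    finally show ?thesis
      by simp
  qed
  then have "{fG E g | g. SEDF E g} \<subseteq> {- int (card E) .. int (card E)}"
    by fastforce
  then show "finite {fG E g | g. SEDF E g}"
    using finite_subset by blast
  show "fG E f \<in> {fG E g | g. SEDF E g}"
    using assms(2) by blast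
qed

lemma two_neighbours:
  assumes sg: "simple_graph V E" and "even (degree E r)" "0 < degree E r"
  obtains y y' where "{r, y} \<in> E" "{r, y'} \<in> E" "y \<noteq> y'"
proof -
  have "\<not> card (inc_edges E r) \<le> 1"
    using assms(2,3) by (auto simp: degree_def)
  then obtain e e' where "e \<in> inc_edges E r" "e' \<in> inc_edges E r" "e \<noteq> e'"
    using card_le_Suc0_iff_eq[OF finite_inc_edges[OF sg]] by auto
  moreover obtain y y' where "e = {r, y}" "e' = {r, y'}"
    using inc_edgesE[OF sg \<open>e \<in> inc_edges E r\<close>] inc_edgesE[OF sg \<open>e' \<in> inc_edges E r\<close>] by metis
  ultimately show ?thesis
    using that by (auto simp: inc_edges_def)
qed

lemma degree_Diff:
  assumes "finite E" and "S \<subseteq> E"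
  shows "degree (E - S) v = degree E v - degree S v"
proof -
  have "inc_edges (E - S) v = inc_edges E v - inc_edges S v"
    by (auto simp: inc_edges_def)
  moreover have "inc_edges S v \<subseteq> inc_edges E v"
    using assms(2) by (auto simp: inc_edges_def)
  ultimately show ?thesis
    using assms(1) by (simp add: degree_def card_Diff_subset inc_edges_def finite_subset)
qed

lemma fv_fG_positive_on:
  assumes "finite E" and "S \<subseteq> E"
  shows "fv E (\<lambda>e. if e \<in> S then 1 else f e) v = fv (E - S) f v + int (degree S v)"
    and "fG E (\<lambda>e. if e \<in> S then 1 else f e) = fG (E - S) f + int (card S)"
proof -
  have split: "(\<Sum>e\<in>A. if e \<in> S then 1 else f e) = (\<Sum>e\<in>A - S. f e) + int (card (A \<inter> S))"
    if "finite A" for A :: "'a set set"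
  proof -
    have "(\<Sum>e\<in>A. if e \<in> S then 1 else f e) = (\<Sum>e\<in>A - S. f e) + (\<Sum>e\<in>A \<inter> S. 1)"
      using that by (simp add: sum.If_cases Diff_eq)
    then show ?thesis
      by simp
  qed
  have "inc_edges E v - S = inc_edges (E - S) v" "inc_edges E v \<inter> S = inc_edges S v"
    using assms(2) by (auto simp: inc_edges_def)
  then show "fv E (\<lambda>e. if e \<in> S then 1 else f e) v = fv (E - S) f v + int (degree S v)"
    using split[of "inc_edges E v"] assms(1) by (simp add: fv_def degree_def inc_edges_def)
  show "fG E (\<lambda>e. if e \<in> S then 1 else f e) = fG (E - S) f + int (card S)"
    using split[OF assms(1)] assms(2) by (simp add: fG_def Int_absorb1)
qed

text \<open>The two edges of the cherry \<open>y r y'\<close> are removed and later put back with sign \<open>+1\<close>, which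
  accounts for \<open>degree {{r, y}, {r, y'}} v\<close> units of the demand of \<open>v\<close>.\<close>
lemma degree_cherry_le_demand:
  assumes "simple_graph V E" "{r, y} \<in> E" "{r, y'} \<in> E" "even (degree E r)"
  shows "degree {{r, y}, {r, y'}} v \<le> demand E v"
proof -
  have le_degree: "degree {{r, y}, {r, y'}} v \<le> degree E v"
    using assms finite_inc_edges[OF assms(1), of v]
    by (auto simp: degree_def inc_edges_def intro!: card_mono)
  have "degree {{r, y}, {r, y'}} v \<le> card {{r, y}, {r, y'}}"
    unfolding degree_def by (rule card_mono) (auto simp: inc_edges_def)
  then have le_2: "degree {{r, y}, {r, y'}} v \<le> 2"
    by (simp add: card_insert_if split: if_splits)
  have le_1: "degree {{r, y}, {r, y'}} v \<le> 1" if "v \<noteq> r"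
  proof -
    have "inc_edges {{r, y}, {r, y'}} v \<subseteq> {{r, v}}"
      using that by (auto simp: inc_edges_def)
    then show ?thesis
      unfolding degree_def using card_mono[of "{{r, v}}"] by fastforce
  qed
  show ?thesis
    using le_degree le_2 le_1 assms(4) by (auto simp: demand_def)
qed

text \<open>After removing the cherry, a vertex with no remaining demand has even degree, so if it is not
  isolated it has two edges; at most one of them, \<open>yy'\<close>, stays inside the cherry.\<close>
lemma cherry_removal_connected:
  fixes E :: "'a set set" and r y y' :: 'a
  defines "S \<equiv> {{r, y}, {r, y'}}"
  assumes sg: "simple_graph V E" and cherry: "{r, y} \<in> E" "{r, y'} \<in> E"
    and parity: "\<forall>v\<in>V. even (degree (E - S) v + (demand E v - degree S v))"
  shows "\<forall>v\<in>V. 0 < degree (E - S) v \<longrightarrow> demand E v - degree S v = 0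
    \<longrightarrow> (\<exists>u. {v, u} \<in> E - S \<and> 0 < demand E u - degree S u)"
proof (intro ballI impI)
  fix v assume "v \<in> V" "0 < degree (E - S) v" and no_demand: "demand E v - degree S v = 0"
  have sg': "simple_graph V (E - S)"
    using sg by (rule simple_graph_subset) blast
  have outside: "demand E u - degree S u = demand E u" if "u \<notin> {r, y, y'}" for u
  proof -
    have "inc_edges S u = {}"
      using that by (auto simp: S_def inc_edges_def)
    then show ?thesis
      by (simp add: degree_def)
  qed
  have "degree (E - S) v \<le> degree E v"
    using finite_inc_edges[OF sg] by (auto simp: degree_def inc_edges_def intro!: card_mono)
  then have "v \<in> {r, y, y'}"
    using outside[of v] no_demand demand_pos[of E v] \<open>0 < degree (E - S) v\<close> by fastforce
  have "even (degree (E - S) v)"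
    using bspec[OF parity \<open>v \<in> V\<close>] unfolding no_demand by simp
  then have "\<not> card (inc_edges (E - S) v) \<le> card {{y, y'}}"
    using \<open>0 < degree (E - S) v\<close> by (simp add: degree_def) presburger
  then have "\<not> inc_edges (E - S) v \<subseteq> {{y, y'}}"
    using card_mono[of "{{y, y'}}" "inc_edges (E - S) v"] by auto
  then obtain e where e: "e \<in> inc_edges (E - S) v" "e \<noteq> {y, y'}"
    by blast
  obtain u where u: "e = {v, u}" "u \<noteq> v" "u \<in> V" "v \<in> V"
    by (rule inc_edgesE[OF sg' e(1)])
  have "e \<notin> S"
    using e(1) by (simp add: inc_edges_def)
  then have "{v, u} \<noteq> {r, y}" "{v, u} \<noteq> {r, y'}" "{v, u} \<noteq> {y, y'}"
    using u(1) e(2) by (auto simp: S_def)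
  then have "u \<notin> {r, y, y'}"
    using \<open>v \<in> {r, y, y'}\<close> u(2) by (auto simp: doubleton_eq_iff)
  moreover have "e \<in> E - S"
    using e(1) by (simp add: inc_edges_def)
  moreover have "0 < demand E u"
    using degree_pos[OF sg, of e u] \<open>e \<in> E - S\<close> u(1) by (simp add: demand_pos)
  ultimately show "\<exists>u. {v, u} \<in> E - S \<and> 0 < demand E u - degree S u"
    using u(1) outside by metis
qed

text \<open>The two cherry edges, set to \<open>+1\<close>, cover four units of demand (two at \<open>r\<close>, one at \<open>y\<close> and
  at \<open>y'\<close>) but add only \<open>2\<close> to \<open>f(G)\<close>.\<close>
lemma signing_above_demand_with_even_vertex:
  assumes sg: "simple_graph V E" and r: "r \<in> V" "even (degree E r)" "0 < degree E r"
  shows "\<exists>f. signed_edge_fun E f \<and> (\<forall>v\<in>V. int (demand E v) \<le> fv E f v)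
    \<and> fG E f \<le> int (\<Sum>v\<in>V. demand E v) - 2"
proof -
  obtain y y' where cherry: "{r, y} \<in> E" "{r, y'} \<in> E" "y \<noteq> y'"
    using two_neighbours[OF sg r(2,3)] by metis
  define S where "S = {{r, y}, {r, y'}}"
  define mu where "mu v = demand E v - degree S v" for v
  have finE: "finite E"
    using sg by (rule simple_graph_finite_edges)
  have "S \<subseteq> E"
    using cherry by (simp add: S_def)
  have sg_S: "simple_graph V S" and sg': "simple_graph V (E - S)"
    using sg \<open>S \<subseteq> E\<close> by (auto intro: simple_graph_subset)
  have S_le: "degree S v \<le> demand E v" for v
    unfolding S_def using degree_cherry_le_demand[OF sg cherry(1,2) r(2)] .
  have deg': "degree (E - S) v = degree E v - degree S v" for v
    using degree_Diff[OF finE \<open>S \<subseteq> E\<close>] .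
  have "\<forall>v\<in>V. mu v \<le> degree (E - S) v"
    by (simp add: mu_def deg' diff_le_mono demand_le_degree)
  moreover have parity: "\<forall>v\<in>V. even (degree (E - S) v + mu v)"
  proof
    fix v
    have "degree (E - S) v + mu v + 2 * degree S v = degree E v + demand E v"
      using S_le[of v] demand_le_degree[of E v] by (simp add: mu_def deg')
    then show "even (degree (E - S) v + mu v)"
      using even_degree_plus_demand[of E v] by (metis dvd_add_left_iff dvd_triv_left)
  qed
  moreover have "\<forall>v\<in>V. 0 < degree (E - S) v \<longrightarrow> mu v = 0 \<longrightarrow> (\<exists>u. {v, u} \<in> E - S \<and> 0 < mu u)"
    using cherry_removal_connected[OF sg cherry(1,2)] parity by (simp add: mu_def S_def)
  ultimately obtain f' where f': "signed_edge_fun (E - S) f'" "\<forall>v\<in>V. int (mu v) \<le> fv (E - S) f' v"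
    "fG (E - S) f' \<le> int (\<Sum>v\<in>V. mu v)"
    using signing_above_bounds[OF sg'] by blast
  define f where "f = (\<lambda>e. if e \<in> S then 1 else f' e)"
  have "signed_edge_fun E f"
    using f'(1) by (auto simp: f_def signed_edge_fun_def)
  moreover have "int (demand E v) \<le> fv E f v" if "v \<in> V" for v
    using bspec[OF f'(2) that] S_le[of v] fv_fG_positive_on(1)[OF finE \<open>S \<subseteq> E\<close>, of f' v]
    by (simp add: f_def mu_def of_nat_diff)
  moreover have "fG E f \<le> int (\<Sum>v\<in>V. demand E v) - 2"
  proof -
    have "card S = 2"
      using cherry(3) by (simp add: S_def doubleton_eq_iff)
    have "int (\<Sum>v\<in>V. degree S v) = 2 * int (card S)"
      using sum_fv[OF sg_S, of "\<lambda>_. 1"] by (simp add: fv_def fG_def degree_def)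
    then have "int (\<Sum>v\<in>V. mu v) = int (\<Sum>v\<in>V. demand E v) - 4"
      using \<open>card S = 2\<close> S_le by (simp add: mu_def of_nat_diff sum_subtractf)
    moreover have "fG E f = fG (E - S) f' + 2"
      using fv_fG_positive_on(2)[OF finE \<open>S \<subseteq> E\<close>, of f'] \<open>card S = 2\<close> by (simp add: f_def)
    ultimately show ?thesis
      using f'(3) by linarith
  qed
  ultimately show ?thesis
    by blast
qed

lemma sum_demand_le:
  assumes "simple_graph V E"
  shows "(\<Sum>v\<in>V. demand E v) \<le> card V + v_even V E"
proof -
  have "finite V"
    using assms by (simp add: simple_graph_def)
  have "(\<Sum>v\<in>V. demand E v) \<le> (\<Sum>v\<in>V. 1 + (if even (degree E v) then 1 else 0))"
    by (rule sum_mono) (simp add: demand_def)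
  also have "\<dots> = card V + (\<Sum>v\<in>V. if even (degree E v) then 1 else 0)"
    by (subst sum.distrib) simp
  also have "(\<Sum>v\<in>V. if even (degree E v) then 1 else 0) = v_even V E"
    using \<open>finite V\<close> by (simp add: sum.If_cases Int_def v_even_def)
  finally show ?thesis .
qed

lemma sum_demand_no_even_vertex:
  assumes "simple_graph V E" and "\<forall>v\<in>V. even (degree E v) \<longrightarrow> degree E v = 0"
  shows "(\<Sum>v\<in>V. demand E v) + v_even V E = card V"
proof -
  have "finite V"
    using assms by (simp add: simple_graph_def)
  have "(\<Sum>v\<in>V. demand E v) = (\<Sum>v\<in>V. if even (degree E v) then 0 else 1)"
    using assms(2) by (intro sum.cong) (auto simp: demand_def)
  also have "\<dots> = card {v\<in>V. odd (degree E v)}"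
    using \<open>finite V\<close> by (simp add: sum.If_cases Int_def)
  finally have odd: "(\<Sum>v\<in>V. demand E v) = card {v\<in>V. odd (degree E v)}" .
  have "card V = card ({v\<in>V. odd (degree E v)} \<union> {v\<in>V. even (degree E v)})"
    by (rule arg_cong[where f = card]) auto
  also have "\<dots> = card {v\<in>V. odd (degree E v)} + v_even V E"
    unfolding v_even_def by (rule card_Un_disjoint) (use \<open>finite V\<close> in auto)
  finally show ?thesis
    using odd by simp
qed

lemma SEDF0_weight_bound:
  assumes sg: "simple_graph V E" and "v_even V E > 0"
  shows "\<exists>f. SEDF0 V E f \<and> fG E f \<le> int (card V) - 2 + int (v_even V E)"
proof -
  obtain f where f: "signed_edge_fun E f" "\<forall>v\<in>V. int (demand E v) \<le> fv E f v"
    "fG E f \<le> int (card V) - 2 + int (v_even V E)"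
  proof (cases "\<exists>r\<in>V. even (degree E r) \<and> 0 < degree E r")
    case True
    then obtain f where f: "signed_edge_fun E f" "\<forall>v\<in>V. int (demand E v) \<le> fv E f v"
      "fG E f \<le> int (\<Sum>v\<in>V. demand E v) - 2"
      using signing_above_demand_with_even_vertex[OF sg] by blast
    moreover have "fG E f \<le> int (card V) - 2 + int (v_even V E)"
      using f(3) sum_demand_le[OF sg] by linarith
    ultimately show ?thesis
      by (intro that[of f])
  next
    case False
    then have "(\<Sum>v\<in>V. demand E v) + v_even V E = card V"
      using sg by (intro sum_demand_no_even_vertex) auto
    obtain f where f: "signed_edge_fun E f" "\<forall>v\<in>V. int (demand E v) \<le> fv E f v"
      "fG E f \<le> int (\<Sum>v\<in>V. demand E v)"
      using signing_above_demand[OF sg] by blast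
    moreover have "fG E f \<le> int (card V) - 2 + int (v_even V E)"
      using f(3) \<open>(\<Sum>v\<in>V. demand E v) + v_even V E = card V\<close> \<open>v_even V E > 0\<close> by linarith
    ultimately show ?thesis
      by (intro that[of f])
  qed
  then show ?thesis
    using SEDF0I[OF sg] by blast
qed

theorem proposition4p1:
  fixes V :: "'a set" and E :: "'a set set"
  assumes "simple_graph V E"
    and "v_even V E > 0"
  shows "(\<exists>f. SEDF0 V E f \<and> fG E f \<le> int (card V) - 2 + int (v_even V E))
         \<and> gamma_s' E \<le> int (card V) - 2 + int (v_even V E)"
proof -
  obtain f where f: "SEDF0 V E f" "fG E f \<le> int (card V) - 2 + int (v_even V E)"
    using SEDF0_weight_bound[OF assms] by blast
  have "gamma_s' E \<le> fG E f"
    using simple_graph_finite_edges[OF assms(1)] SEDF0_imp_SEDF[OF assms(1) f(1)] by (rule gamma_s'_le)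
  with f show ?thesis
    by auto
qed

end
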